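(* Let $k$ be a field of characteristic $0$, $R=k[x_1,\dots,x_n]$, $\ell=x_1+\dots+x_n$, let $d_1,\dots,d_n$ be positive integers such that $I=(x_1^{d_1},\dots,x_{n-1}^{d_{n-1}},x_n^2,\ell^{d_n})$ is minimally generated by these elements, and let $G=(x_1^{d_1},\dots,x_{n-1}^{d_{n-1}},x_n^2)\colon(\ell^{d_n})$. If $t=\sum_{i=1}^n(d_i-1)$ is odd, then $I\colon(x_n)=I+(x_n)$ and $G\colon(x_n)=G+(x_n)$; equivalently, the sequences $$0\to R/(I+(x_n))(-1)\xrightarrow{\cdot x_n}R/I\to R/(I+(x_n))\to0,\qquad 0\to R/(G+(x_n))(-1)\xrightarrow{\cdot x_n}R/G\to R/(G+(x_n))\to0$$ are exact. *)

theory Defs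
  imports Main "HOL-Library.Poly_Mapping"
begin

text \<open>Multivariate polynomials over 'a: finitely supported maps from monomials
(exponent vectors nat =>0 nat) to coefficients.\<close>

type_synonym 'a mpoly = "(nat \<Rightarrow>\<^sub>0 nat) \<Rightarrow>\<^sub>0 'a"

definition polyR :: "nat \<Rightarrow> ('a::comm_ring_1) mpoly set" where
  "polyR n = {p. \<forall>m \<in> Poly_Mapping.keys p. Poly_Mapping.keys m \<subseteq> {1..n}}"

definition var :: "nat \<Rightarrow> ('a::comm_ring_1) mpoly" where
  "var i = Poly_Mapping.single (Poly_Mapping.single i 1) 1"

definition ideal_gen :: "nat \<Rightarrow> ('a::comm_ring_1) mpoly set \<Rightarrow> 'a mpoly set" where
  "ideal_gen n S = {p. \<exists>c. (\<forall>g\<in>S. c g \<in> polyR n) \<and> p = (\<Sum>g\<in>S. c g * g)}"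

definition ideal_colon :: "nat \<Rightarrow> ('a::comm_ring_1) mpoly set \<Rightarrow> 'a mpoly \<Rightarrow> 'a mpoly set" where
  "ideal_colon n I f = {p \<in> polyR n. p * f \<in> I}"

definition ideal_plus :: "('a::comm_ring_1) mpoly set \<Rightarrow> 'a mpoly set \<Rightarrow> 'a mpoly set" where
  "ideal_plus I J = {a + b | a b. a \<in> I \<and> b \<in> J}"

definition minimally_generated :: "nat \<Rightarrow> ('a::comm_ring_1) mpoly list \<Rightarrow> bool" where
  "minimally_generated n gs \<longleftrightarrow>
     (\<forall>j < length gs. gs ! j \<notin> ideal_gen n {gs ! i | i. i < length gs \<and> i \<noteq> j})"

end

theory Submission
  imports Defs "HOL-Library.FuncSet"
begin

text \<open>Put \<open>A = (x\<^sub>1\<^bsup>d\<^sub>1\<^esup>, \<dots>, x\<^bsub>n-1\<^esub>\<^bsup>d\<^bsub>n-1\<^esub>\<^esup>, x\<^sub>n\<^sup>2)\<close>. The monomials outside \<open>A\<close> are \<open>x\<^sup>a\<close> and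
  \<open>x\<^sup>a x\<^sub>n\<close> for \<open>a\<close> in the box \<open>a\<^sub>i < d\<^sub>i\<close>, so \<open>R/A = B \<oplus> x\<^sub>n B\<close> with
  \<open>B = k[x\<^sub>1..x\<^bsub>n-1\<^esub>]/(x\<^sub>i\<^bsup>d\<^sub>i\<^esup>)\<close>, a monomial complete intersection of socle degree
  \<open>s = \<Sum>\<^bsub>i<n\<^esub> (d\<^sub>i - 1)\<close>. Modulo \<open>x\<^sub>n\<^sup>2\<close>, multiplication by \<open>\<ell>\<^sup>D\<close> acts as \<open>m\<^sup>D + D m\<^bsup>D-1\<^esup> x\<^sub>n\<close>
  with \<open>m = x\<^sub>1 + \<dots> + x\<^bsub>n-1\<^esub>\<close>, and comparing coefficients reduces both colon identities to:
  if \<open>m\<^sup>D u = 0\<close> in \<open>B\<close> then \<open>m\<^bsup>D-1\<^esup> u \<in> m\<^sup>D B\<close>.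

  In characteristic 0, \<open>m\<close> and a suitable lowering operator form an \<open>sl\<^sub>2\<close>-pair on \<open>B\<close>
  (strong Lefschetz property): from degree \<open>q\<close>, \<open>m\<^sup>k\<close> is injective if \<open>2q + k \<le> s\<close> and surjective
  if \<open>k \<le> 2q - s\<close>. For \<open>u\<close> homogeneous of degree \<open>q\<close>, either \<open>2q + D \<le> s\<close> and \<open>u = 0\<close>, or,
  because \<open>t = s + d\<^sub>n - 1\<close> is odd, \<open>2q + D \<ge> s + 2\<close> and \<open>m\<^sup>D\<close> maps degree \<open>q + D - 1\<close> onto
  degree \<open>q + 2D - 1\<close>.\<close>

section \<open>Monomials and generated ideals\<close>

abbreviation lookup where "lookup \<equiv> Poly_Mapping.lookup"
abbreviation single where "single \<equiv> Poly_Mapping.single"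
abbreviation keys where "keys \<equiv> Poly_Mapping.keys"

lemma poly_mapping_sum_single: "(p :: 'b \<Rightarrow>\<^sub>0 'c::comm_monoid_add) = (\<Sum>t\<in>keys p. single t (lookup p t))"
proof (rule poly_mapping_eqI)
  fix x
  have "lookup (\<Sum>t\<in>keys p. single t (lookup p t)) x = (\<Sum>t\<in>keys p. lookup p t when t = x)"
    by (simp add: lookup_sum lookup_single)
  also have "\<dots> = lookup p x"
    by (cases "x \<in> keys p") (auto simp: in_keys_iff when_def)
  finally show "lookup p x = lookup (\<Sum>t\<in>keys p. single t (lookup p t)) x" by simp
qed

lemma lookup_single_mult:
  fixes q :: "('b \<Rightarrow>\<^sub>0 nat) \<Rightarrow>\<^sub>0 'c::comm_semiring_1"
  shows "lookup (single b c * q) a = (if \<exists>k. a = b + k then c * lookup q (a - b) else 0)"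
proof -
  have "single b c * q = (\<Sum>t\<in>keys q. single (b + t) (c * lookup q t))"
    by (subst poly_mapping_sum_single[of q]) (simp add: sum_distrib_left mult_single)
  then have "lookup (single b c * q) a = (\<Sum>t\<in>keys q. c * lookup q t when b + t = a)"
    by (simp add: lookup_sum lookup_single)
  also have "\<dots> = (if \<exists>k. a = b + k then c * lookup q (a - b) else 0)"
  proof (cases "\<exists>k. a = b + k")
    case True
    then obtain k where k: "a = b + k" by blast
    have "(\<Sum>t\<in>keys q. c * lookup q t when b + t = a) = (\<Sum>t\<in>keys q. c * lookup q t when t = k)"
      using k by (intro sum.cong) auto
    also have "\<dots> = c * lookup q k" by (cases "k \<in> keys q") (auto simp: in_keys_iff when_def)
    finally show ?thesis using k by simp
  qed (auto simp: when_def intro!: sum.neutral)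
  finally show ?thesis .
qed

lemma exists_add_single_iff: "(\<exists>k. (a :: 'b \<Rightarrow>\<^sub>0 nat) = single i j + k) \<longleftrightarrow> j \<le> lookup a i"
proof
  assume "j \<le> lookup a i"
  then have "a = single i j + (a - single i j)"
    by (intro poly_mapping_eqI) (auto simp: lookup_add lookup_minus lookup_single when_def)
  then show "\<exists>k. a = single i j + k" by blast
qed (auto simp: lookup_add)

lemma single_diff_add_cancel: "0 < lookup a i \<Longrightarrow> (a :: 'v \<Rightarrow>\<^sub>0 nat) - single i 1 + single i 1 = a"
  by (rule poly_mapping_eqI) (auto simp: lookup_add lookup_minus lookup_single when_def)

lemma single_diff_add_commute:
  "0 < lookup a i \<Longrightarrow> (a :: 'v \<Rightarrow>\<^sub>0 nat) - single i 1 + single j 1 = a + single j 1 - single i 1"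
  by (rule poly_mapping_eqI) (auto simp: lookup_add lookup_minus lookup_single when_def)

lemma var_power: "(var i :: 'a::comm_ring_1 mpoly) ^ k = single (single i k) 1"
proof (induction k)
  case (Suc k)
  have "single i (Suc k) = single i 1 + single i k" by (simp add: single_add[symmetric])
  then show ?case using Suc by (simp add: var_def mult_single del: One_nat_def)
qed simp

lemma lookup_var_power_mult:
  "lookup ((var i :: 'a::comm_ring_1 mpoly) ^ j * q) a = (if j \<le> lookup a i then lookup q (a - single i j) else 0)"
  unfolding var_power lookup_single_mult exists_add_single_iff by simp

lemma lookup_var_mult:
  "lookup ((var i :: 'a::comm_ring_1 mpoly) * q) a = (if 0 < lookup a i then lookup q (a - single i 1) else 0)"
  using lookup_var_power_mult[of i 1 q a] by (simp add: Suc_le_eq)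

lemma finite_bounded_exponents:
  assumes "finite V"
  shows "finite {a :: 'b \<Rightarrow>\<^sub>0 nat. keys a \<subseteq> V \<and> (\<forall>i\<in>V. lookup a i < e i)}" (is "finite ?B")
proof -
  have "inj_on (\<lambda>a. restrict (lookup a) V) ?B"
  proof (rule inj_onI, rule poly_mapping_eqI)
    fix a b i assume "a \<in> ?B" "b \<in> ?B" "restrict (lookup a) V = restrict (lookup b) V"
    then show "lookup a i = lookup b i"
      by (cases "i \<in> V") (auto simp: subset_iff in_keys_iff dest: fun_cong[of _ _ i], metis gr0I)
  qed
  moreover have "(\<lambda>a. restrict (lookup a) V) ` ?B \<subseteq> PiE V (\<lambda>i. {..<e i})"
    by auto
  then have "finite ((\<lambda>a. restrict (lookup a) V) ` ?B)"
    by (rule finite_subset) (simp add: assms finite_PiE)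
  ultimately show ?thesis using finite_imageD by blast
qed

lemma polyR_0 [simp]: "0 \<in> polyR n"
  by (simp add: polyR_def)

lemma polyR_1 [simp]: "1 \<in> polyR n"
  by (simp add: polyR_def)

lemma polyR_add: "p \<in> polyR n \<Longrightarrow> q \<in> polyR n \<Longrightarrow> p + q \<in> polyR n"
  unfolding polyR_def using keys_add[of p q] by blast

lemma polyR_uminus: "p \<in> polyR n \<Longrightarrow> - p \<in> polyR n"
  unfolding polyR_def by simp

lemma polyR_diff: "p \<in> polyR n \<Longrightarrow> q \<in> polyR n \<Longrightarrow> p - q \<in> polyR n"
  using polyR_add[OF _ polyR_uminus] by (metis diff_conv_add_uminus)

lemma polyR_mult:
  assumes "p \<in> polyR n" "q \<in> polyR n"
  shows "p * q \<in> polyR n"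
  unfolding polyR_def mem_Collect_eq
proof
  fix m assume "m \<in> keys (p * q)"
  then obtain a b where "m = a + b" "a \<in> keys p" "b \<in> keys q" using keys_mult by blast
  then show "keys m \<subseteq> {1..n}" using assms keys_add[of a b] unfolding polyR_def by blast
qed

lemma polyR_sum: "(\<And>x. x \<in> X \<Longrightarrow> f x \<in> polyR n) \<Longrightarrow> sum f X \<in> polyR n"
  by (induction X rule: infinite_finite_induct) (auto intro: polyR_add)

lemma polyR_power: "p \<in> polyR n \<Longrightarrow> p ^ k \<in> polyR n"
  by (induction k) (auto intro: polyR_mult)

lemma polyR_var: "i \<in> {1..n} \<Longrightarrow> var i \<in> polyR n"
  by (simp add: polyR_def var_def)

lemma polyR_single: "keys a \<subseteq> {1..n} \<Longrightarrow> single a c \<in> polyR n"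
  by (simp add: polyR_def)

lemma ideal_gen_0: "0 \<in> ideal_gen n S"
  unfolding ideal_gen_def by (auto intro: exI[of _ "\<lambda>g. 0"])

lemma ideal_gen_add:
  assumes "p \<in> ideal_gen n S" "q \<in> ideal_gen n S"
  shows "p + q \<in> ideal_gen n S"
proof -
  obtain c c' where "\<forall>g\<in>S. c g \<in> polyR n" "\<forall>g\<in>S. c' g \<in> polyR n"
    and "p = (\<Sum>g\<in>S. c g * g)" "q = (\<Sum>g\<in>S. c' g * g)"
    using assms unfolding ideal_gen_def by blast
  then show ?thesis unfolding ideal_gen_def
    by (auto intro!: exI[of _ "\<lambda>g. c g + c' g"] polyR_add simp: sum.distrib distrib_right)
qed

lemma ideal_gen_mult:
  assumes "p \<in> ideal_gen n S" "r \<in> polyR n"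
  shows "r * p \<in> ideal_gen n S"
proof -
  obtain c where "\<forall>g\<in>S. c g \<in> polyR n" "p = (\<Sum>g\<in>S. c g * g)"
    using assms unfolding ideal_gen_def by blast
  then show ?thesis unfolding ideal_gen_def using assms(2)
    by (auto intro!: exI[of _ "\<lambda>g. r * c g"] polyR_mult simp: sum_distrib_left mult.assoc)
qed

lemma ideal_gen_sum: "(\<And>x. x \<in> X \<Longrightarrow> f x \<in> ideal_gen n S) \<Longrightarrow> sum f X \<in> ideal_gen n S"
  by (induction X rule: infinite_finite_induct) (auto intro: ideal_gen_add ideal_gen_0)

lemma ideal_gen_generator: "finite S \<Longrightarrow> g \<in> S \<Longrightarrow> g \<in> ideal_gen n S"
  unfolding ideal_gen_def
  by (auto intro!: exI[of _ "\<lambda>h. if h = g then 1 else 0"] simp: if_distrib[of "\<lambda>x. x * _"] cong: if_cong)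

lemma ideal_gen_subset_polyR: "S \<subseteq> polyR n \<Longrightarrow> ideal_gen n S \<subseteq> polyR n"
  unfolding ideal_gen_def by (auto intro!: polyR_sum polyR_mult)

lemma ideal_gen_mono: "finite T \<Longrightarrow> S \<subseteq> T \<Longrightarrow> ideal_gen n S \<subseteq> ideal_gen n T"
proof
  fix p assume T: "finite T" and ST: "S \<subseteq> T" and "p \<in> ideal_gen n S"
  then obtain c where c: "\<forall>g\<in>S. c g \<in> polyR n" and p: "p = (\<Sum>g\<in>S. c g * g)"
    unfolding ideal_gen_def by blast
  have "p = (\<Sum>g\<in>T. (if g \<in> S then c g else 0) * g)"
    unfolding p using T ST by (intro sum.mono_neutral_cong_left) auto
  then show "p \<in> ideal_gen n T"
    unfolding ideal_gen_def using c by (auto intro!: exI[of _ "\<lambda>g. if g \<in> S then c g else 0"])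
qed

lemma ideal_gen_insertE:
  assumes "finite S" "p \<in> ideal_gen n (insert g S)"
  obtains j f where "j \<in> ideal_gen n S" "f \<in> polyR n" "p = j + f * g"
proof (cases "g \<in> S")
  case True
  then show ?thesis using assms that[of p 0] by (simp add: insert_absorb)
next
  case False
  obtain c where c: "\<forall>h\<in>insert g S. c h \<in> polyR n" and p: "p = (\<Sum>h\<in>insert g S. c h * h)"
    using assms(2) unfolding ideal_gen_def by blast
  have "p = (\<Sum>h\<in>S. c h * h) + c g * g" using p False assms(1) by (simp add: add.commute)
  moreover have "(\<Sum>h\<in>S. c h * h) \<in> ideal_gen n S" unfolding ideal_gen_def using c by auto
  ultimately show ?thesis using c that by blast
qed

lemma ideal_gen_singleton: "p \<in> ideal_gen n {g} \<longleftrightarrow> (\<exists>c\<in>polyR n. p = c * g)"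
  unfolding ideal_gen_def by auto

lemma single_in_ideal_gen:
  assumes "keys t \<subseteq> {1..n}" "t = b + k" "single b 1 \<in> ideal_gen n S"
  shows "single t c \<in> ideal_gen n S"
proof -
  have "keys k \<subseteq> keys t" using assms(2) by (auto simp: in_keys_iff lookup_add)
  then have "single k c \<in> polyR n" using assms(1) by (intro polyR_single) auto
  from ideal_gen_mult[OF assms(3) this] show ?thesis using assms(2) by (simp add: mult_single add.commute)
qed

lemma ideal_plus_sum:
  "(\<And>x. x \<in> X \<Longrightarrow> f x \<in> ideal_plus (ideal_gen n S) (ideal_gen n T)) \<Longrightarrow>
   sum f X \<in> ideal_plus (ideal_gen n S) (ideal_gen n T)"
proof (induction X rule: infinite_finite_induct)
  case (insert x X)
  then obtain a b a' b' where "a \<in> ideal_gen n S" "b \<in> ideal_gen n T" "f x = a + b"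
    "a' \<in> ideal_gen n S" "b' \<in> ideal_gen n T" "sum f X = a' + b'"
    unfolding ideal_plus_def by force
  moreover have "sum f (insert x X) = (a + a') + (b + b')"
    using insert.hyps calculation by (simp add: algebra_simps)
  ultimately show ?case unfolding ideal_plus_def by (blast intro: ideal_gen_add)
qed (auto simp: ideal_plus_def intro!: exI[of _ 0] ideal_gen_0)

lemma ideal_plus_intro: "a \<in> I \<Longrightarrow> b \<in> J \<Longrightarrow> a + b \<in> ideal_plus I J"
  unfolding ideal_plus_def by blast

lemma ideal_colon_ideal_gen_add:
  assumes "p \<in> ideal_colon n (ideal_gen n S) f" "q \<in> ideal_colon n (ideal_gen n S) f"
  shows "p + q \<in> ideal_colon n (ideal_gen n S) f"
  using assms by (auto simp: ideal_colon_def distrib_right intro: polyR_add ideal_gen_add)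

lemma ideal_colon_ideal_gen_mult:
  assumes "p \<in> ideal_colon n (ideal_gen n S) f" "r \<in> polyR n"
  shows "r * p \<in> ideal_colon n (ideal_gen n S) f"
  using assms ideal_gen_mult[of "p * f" n S r]
  by (auto simp: ideal_colon_def mult.assoc intro: polyR_mult)

lemma ideal_plus_var_subset_colon:
  assumes "J \<subseteq> polyR n" "\<And>p q. p \<in> J \<Longrightarrow> q \<in> J \<Longrightarrow> p + q \<in> J"
    "\<And>p r. p \<in> J \<Longrightarrow> r \<in> polyR n \<Longrightarrow> r * p \<in> J" "var i ^ 2 \<in> J" "i \<in> {1..n}"
  shows "ideal_plus J (ideal_gen n {var i}) \<subseteq> ideal_colon n J (var i)"
proof
  fix p assume "p \<in> ideal_plus J (ideal_gen n {var i})"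
  then obtain a c where a: "a \<in> J" and c: "c \<in> polyR n" and p: "p = a + c * var i"
    unfolding ideal_plus_def ideal_gen_singleton by blast
  have "p \<in> polyR n" unfolding p using a c assms(1,5) by (blast intro: polyR_add polyR_mult polyR_var)
  moreover have "p * var i = var i * a + c * var i ^ 2"
    unfolding p by (simp add: algebra_simps power2_eq_square)
  moreover have "var i * a + c * var i ^ 2 \<in> J"
    using assms(2-5) a c polyR_var by blast
  ultimately show "p \<in> ideal_colon n J (var i)" by (simp add: ideal_colon_def)
qed

section \<open>The \<open>sl\<^sub>2\<close>-action on a truncated monomial box\<close>

definition fun_linear :: "(('b \<Rightarrow> 'a::field) \<Rightarrow> 'b \<Rightarrow> 'a) \<Rightarrow> bool" where
  "fun_linear T \<longleftrightarrow> (\<forall>c g. T (\<lambda>x. c * g x) = (\<lambda>x. c * T g x)) \<and>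
     (\<forall>g h. T (\<lambda>x. g x + h x) = (\<lambda>x. T g x + T h x))"

lemma fun_linear_scale: "fun_linear T \<Longrightarrow> T (\<lambda>x. c * g x) = (\<lambda>x. c * T g x)"
  unfolding fun_linear_def by blast

lemma fun_linear_add: "fun_linear T \<Longrightarrow> T (\<lambda>x. g x + h x) = (\<lambda>x. T g x + T h x)"
  unfolding fun_linear_def by blast

lemma fun_linear_zero: "fun_linear T \<Longrightarrow> T (\<lambda>x. 0) = (\<lambda>x. 0)"
  using fun_linear_scale[of T 0 "\<lambda>x. 0"] by simp

lemma fun_linear_diff: "fun_linear T \<Longrightarrow> T (\<lambda>x. g x - h x) = (\<lambda>x. T g x - T h x)"
  using fun_linear_add[of T g "\<lambda>x. (- 1) * h x"] fun_linear_scale[of T "- 1" h] by simp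

lemma fun_linear_sum:
  assumes "fun_linear T" "finite X"
  shows "T (\<lambda>x. \<Sum>k\<in>X. f k x) = (\<lambda>x. \<Sum>k\<in>X. T (f k) x)"
  using assms(2)
proof (induction X rule: finite_induct)
  case (insert k X)
  then show ?case using fun_linear_add[OF assms(1), of "f k" "\<lambda>x. \<Sum>k\<in>X. f k x"] by simp
qed (simp add: fun_linear_zero[OF assms(1)])

lemma fun_linear_funpow: "fun_linear T \<Longrightarrow> fun_linear (T ^^ k)"
  by (induction k) (simp_all add: fun_linear_def)

text \<open>On the box of exponent vectors \<open>a\<close> with \<open>a\<^sub>i < e\<^sub>i\<close> (a monomial basis of
  \<open>k[x\<^sub>i : i \<in> V] / (x\<^sub>i\<^bsup>e\<^sub>i\<^esub>)\<close>), \<open>raise\<close> is multiplication by \<open>\<Sum>\<^sub>i x\<^sub>i\<close> acting on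
  coefficient functions, and \<open>lower\<close> is chosen so that the two form an \<open>sl\<^sub>2\<close>-pair whose
  commutator acts on degree \<open>q\<close> by \<open>2q - s\<close>, \<open>s\<close> the socle degree.\<close>

locale monomial_box =
  fixes V :: "'v set" and e :: "'v \<Rightarrow> nat"
  assumes finite_V: "finite V"
begin

definition in_box :: "('v \<Rightarrow>\<^sub>0 nat) \<Rightarrow> bool" where
  "in_box a \<longleftrightarrow> keys a \<subseteq> V \<and> (\<forall>i\<in>V. lookup a i < e i)"

definition total_deg :: "('v \<Rightarrow>\<^sub>0 nat) \<Rightarrow> nat" where
  "total_deg a = (\<Sum>i\<in>V. lookup a i)"

definition socle_deg :: nat where
  "socle_deg = (\<Sum>i\<in>V. e i - 1)"

definition raise :: "(('v \<Rightarrow>\<^sub>0 nat) \<Rightarrow> 'a::field_char_0) \<Rightarrow> ('v \<Rightarrow>\<^sub>0 nat) \<Rightarrow> 'a" where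
  "raise g = (\<lambda>a. if in_box a then \<Sum>i\<in>{i\<in>V. 0 < lookup a i}. g (a - single i 1) else 0)"

definition lower_coeff :: "('v \<Rightarrow>\<^sub>0 nat) \<Rightarrow> 'v \<Rightarrow> nat" where
  "lower_coeff a j = (lookup a j + 1) * (e j - lookup a j - 1)"

definition lower :: "(('v \<Rightarrow>\<^sub>0 nat) \<Rightarrow> 'a::field_char_0) \<Rightarrow> ('v \<Rightarrow>\<^sub>0 nat) \<Rightarrow> 'a" where
  "lower g = (\<lambda>a. if in_box a then \<Sum>j\<in>V. of_nat (lower_coeff a j) * g (a + single j 1) else 0)"

definition homogeneous :: "nat \<Rightarrow> (('v \<Rightarrow>\<^sub>0 nat) \<Rightarrow> 'a::field_char_0) \<Rightarrow> bool" where
  "homogeneous q g \<longleftrightarrow> (\<forall>a. \<not> in_box a \<or> total_deg a \<noteq> q \<longrightarrow> g a = 0)"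

lemma in_box_minus_single:
  assumes "in_box a" "i \<in> V" "0 < lookup a i"
  shows "in_box (a - single i 1)" "total_deg (a - single i 1) = total_deg a - 1" "1 \<le> total_deg a"
proof -
  have "keys (a - single i 1) \<subseteq> keys a"
    by (auto simp: in_keys_iff lookup_minus)
  then show "in_box (a - single i 1)" using assms unfolding in_box_def
    by (auto simp: lookup_minus lookup_single when_def)
  have "total_deg a = (\<Sum>j\<in>V. lookup (a - single i 1) j + (if j = i then 1 else 0))"
    unfolding total_deg_def using assms by (intro sum.cong) (auto simp: lookup_minus lookup_single when_def)
  also have "\<dots> = total_deg (a - single i 1) + 1"
    using assms finite_V by (simp add: sum.distrib total_deg_def)
  finally show "total_deg (a - single i 1) = total_deg a - 1" "1 \<le> total_deg a" by auto
qed

lemma in_box_plus_single: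
  assumes "in_box a" "j \<in> V" "lookup a j + 1 < e j"
  shows "in_box (a + single j 1)" "total_deg (a + single j 1) = total_deg a + 1"
proof -
  have "keys (a + single j 1) \<subseteq> insert j (keys a)"
    by (auto simp: in_keys_iff lookup_add lookup_single when_def split: if_splits)
  then show "in_box (a + single j 1)" using assms unfolding in_box_def
    by (auto simp: lookup_add lookup_single when_def)
  have "total_deg (a + single j 1) = (\<Sum>i\<in>V. lookup a i + (if i = j then 1 else 0))"
    unfolding total_deg_def using assms by (intro sum.cong) (auto simp: lookup_add lookup_single when_def)
  also have "\<dots> = total_deg a + 1"
    using assms finite_V by (simp add: sum.distrib total_deg_def)
  finally show "total_deg (a + single j 1) = total_deg a + 1" .
qed

lemma total_deg_le_socle_deg: "in_box a \<Longrightarrow> total_deg a \<le> socle_deg"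
  unfolding total_deg_def socle_deg_def in_box_def by (intro sum_mono) (auto simp: less_Suc_eq_le[symmetric])

lemma finite_box: "finite {a. in_box a}"
  using finite_bounded_exponents[OF finite_V, of e] by (simp add: in_box_def)

lemma lower_coeff_minus_single_same:
  "0 < lookup a i \<Longrightarrow> lower_coeff (a - single i 1) i = lookup a i * (e i - lookup a i)"
  by (simp add: lower_coeff_def lookup_minus)

lemma lower_coeff_minus_single_other: "j \<noteq> i \<Longrightarrow> lower_coeff (a - single i 1) j = lower_coeff a j"
  by (simp add: lower_coeff_def lookup_minus lookup_single)

definition cross_terms :: "(('v \<Rightarrow>\<^sub>0 nat) \<Rightarrow> 'a::field_char_0) \<Rightarrow> ('v \<Rightarrow>\<^sub>0 nat) \<Rightarrow> 'a" where
  "cross_terms g a = (\<Sum>i\<in>{i\<in>V. 0 < lookup a i}. \<Sum>j\<in>{j\<in>V. j \<noteq> i}.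
     of_nat (lower_coeff a j) * g (a + single j 1 - single i 1))"

lemma raise_lower_eq:
  assumes "in_box a"
  shows "raise (lower g) a = (\<Sum>i\<in>V. of_nat (lookup a i * (e i - lookup a i))) * g a + cross_terms g a"
proof -
  let ?P = "{i\<in>V. 0 < lookup a i}"
  have "lower g (a - single i 1) = of_nat (lookup a i * (e i - lookup a i)) * g a +
      (\<Sum>j\<in>{j\<in>V. j \<noteq> i}. of_nat (lower_coeff a j) * g (a + single j 1 - single i 1))"
    if "i \<in> ?P" for i
  proof -
    from that have i: "i \<in> V" "0 < lookup a i" by auto
    have "lower g (a - single i 1) =
        (\<Sum>j\<in>V. of_nat (lower_coeff (a - single i 1) j) * g (a - single i 1 + single j 1))"
      using in_box_minus_single(1)[OF assms i] by (simp add: lower_def)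
    also have "\<dots> = of_nat (lower_coeff (a - single i 1) i) * g (a - single i 1 + single i 1) +
        (\<Sum>j\<in>V - {i}. of_nat (lower_coeff (a - single i 1) j) * g (a - single i 1 + single j 1))"
      by (rule sum.remove[OF finite_V i(1)])
    also have "(\<Sum>j\<in>V - {i}. of_nat (lower_coeff (a - single i 1) j) * g (a - single i 1 + single j 1)) =
        (\<Sum>j\<in>{j\<in>V. j \<noteq> i}. of_nat (lower_coeff a j) * g (a + single j 1 - single i 1))"
      using i by (intro sum.cong) (auto simp: lower_coeff_minus_single_other single_diff_add_commute simp del: One_nat_def)
    finally show ?thesis
      using i by (simp add: lower_coeff_minus_single_same single_diff_add_cancel del: One_nat_def)
  qed
  then have "raise (lower g) a = (\<Sum>i\<in>?P. of_nat (lookup a i * (e i - lookup a i))) * g a + cross_terms g a"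
    using assms by (simp add: raise_def cross_terms_def sum.distrib sum_distrib_right)
  moreover have "(\<Sum>i\<in>?P. of_nat (lookup a i * (e i - lookup a i))) =
      (\<Sum>i\<in>V. (of_nat (lookup a i * (e i - lookup a i)) :: 'a))"
    using finite_V by (intro sum.mono_neutral_left) auto
  ultimately show ?thesis by simp
qed

lemma lower_raise_eq:
  assumes "in_box a"
  shows "lower (raise g) a = (\<Sum>j\<in>V. of_nat (lower_coeff a j)) * g a + cross_terms g a"
proof -
  let ?P = "{i\<in>V. 0 < lookup a i}"
  have "of_nat (lower_coeff a j) * raise g (a + single j 1) = of_nat (lower_coeff a j) * g a +
      (\<Sum>i\<in>{i\<in>?P. j \<noteq> i}. of_nat (lower_coeff a j) * g (a + single j 1 - single i 1))"
    if j: "j \<in> V" for j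
  proof (cases "lookup a j + 1 < e j")
    case True
    have "{i\<in>V. 0 < lookup (a + single j 1) i} = insert j {i\<in>?P. j \<noteq> i}"
      using j by (auto simp: lookup_add lookup_single when_def)
    then have "raise g (a + single j 1) = g a + (\<Sum>i\<in>{i\<in>?P. j \<noteq> i}. g (a + single j 1 - single i 1))"
      using in_box_plus_single(1)[OF assms j True] finite_V by (simp add: raise_def)
    then show ?thesis by (simp add: distrib_left sum_distrib_left)
  qed (simp add: lower_coeff_def)
  then have "lower (raise g) a = (\<Sum>j\<in>V. of_nat (lower_coeff a j)) * g a +
      (\<Sum>j\<in>V. \<Sum>i\<in>{i\<in>?P. j \<noteq> i}. of_nat (lower_coeff a j) * g (a + single j 1 - single i 1))"
    using assms by (simp add: lower_def sum.distrib sum_distrib_right)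
  also have "(\<Sum>j\<in>V. \<Sum>i\<in>{i\<in>?P. j \<noteq> i}. of_nat (lower_coeff a j) * g (a + single j 1 - single i 1)) =
      cross_terms g a"
    unfolding cross_terms_def by (rule sum.swap_restrict[symmetric]) (simp_all add: finite_V)
  finally show ?thesis .
qed

lemma box_weight:
  assumes "in_box a"
  shows "(\<Sum>i\<in>V. int (lookup a i * (e i - lookup a i))) - (\<Sum>j\<in>V. int (lower_coeff a j)) =
    2 * int (total_deg a) - int socle_deg"
proof -
  have "int (lookup a i * (e i - lookup a i)) - int (lower_coeff a i) = 2 * int (lookup a i) - int (e i - 1)"
    if "i \<in> V" for i
  proof -
    from assms that have "lookup a i < e i" by (auto simp: in_box_def)
    then obtain t where "e i = lookup a i + 1 + t" using less_imp_Suc_add by fastforce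
    then show ?thesis by (simp add: lower_coeff_def algebra_simps)
  qed
  then show ?thesis
    by (simp add: sum_subtractf[symmetric] total_deg_def socle_deg_def sum_distrib_left cong: sum.cong)
qed

lemma raise_lower_commutator:
  assumes "in_box a"
  shows "raise (lower g) a = lower (raise g) a + of_int (2 * int (total_deg a) - int socle_deg) * g a"
proof -
  have "raise (lower g) a - lower (raise g) a =
      of_int ((\<Sum>i\<in>V. int (lookup a i * (e i - lookup a i))) - (\<Sum>j\<in>V. int (lower_coeff a j))) * g a"
    unfolding raise_lower_eq[OF assms] lower_raise_eq[OF assms] by (simp add: algebra_simps)
  then show ?thesis unfolding box_weight[OF assms] by (simp add: algebra_simps)
qed

lemma fun_linear_raise: "fun_linear raise"
  unfolding fun_linear_def raise_def by (simp add: fun_eq_iff sum_distrib_left sum.distrib)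

lemma fun_linear_lower: "fun_linear lower"
  unfolding fun_linear_def lower_def
  by (simp add: fun_eq_iff sum_distrib_left sum.distrib distrib_left mult.left_commute)

lemma raise_pow_zero [simp]: "(raise ^^ k) (\<lambda>a. 0) = (\<lambda>a. 0)"
  using fun_linear_zero[OF fun_linear_funpow[OF fun_linear_raise]] .

lemma lower_pow_zero [simp]: "(lower ^^ k) (\<lambda>a. 0) = (\<lambda>a. 0)"
  using fun_linear_zero[OF fun_linear_funpow[OF fun_linear_lower]] .

lemma raise_zero [simp]: "raise (\<lambda>a. 0) = (\<lambda>a. 0)"
  using fun_linear_zero[OF fun_linear_raise] .

lemma lower_zero [simp]: "lower (\<lambda>a. 0) = (\<lambda>a. 0)"
  using fun_linear_zero[OF fun_linear_lower] .

lemma raise_cong: "(\<And>a. in_box a \<Longrightarrow> g a = h a) \<Longrightarrow> raise g = raise h"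
  unfolding raise_def by (auto simp: fun_eq_iff dest: in_box_minus_single intro!: sum.cong)

lemma raise_pow_cong:
  assumes "\<And>a. in_box a \<Longrightarrow> g a = h a" "in_box a"
  shows "(raise ^^ k) g a = (raise ^^ k) h a"
proof (cases k)
  case (Suc k')
  then show ?thesis using raise_cong[OF assms(1)] by (simp add: funpow_Suc_right del: funpow.simps)
qed (simp add: assms)

lemma homogeneous_raise:
  assumes "homogeneous q g"
  shows "homogeneous (Suc q) (raise g)"
  unfolding homogeneous_def
proof (intro allI impI)
  fix a assume a: "\<not> in_box a \<or> total_deg a \<noteq> Suc q"
  have "g (a - single i 1) = 0" if "in_box a" "i \<in> V" "0 < lookup a i" for i
    using in_box_minus_single[OF that] that(1) a assms by (auto simp: homogeneous_def)
  then show "raise g a = 0" by (simp add: raise_def)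
qed

lemma homogeneous_lower:
  assumes "homogeneous q g"
  shows "homogeneous (q - 1) (lower g)" and "q = 0 \<Longrightarrow> lower g = (\<lambda>a. 0)"
proof -
  have "lower g a = 0" if "q = 0 \<or> \<not> in_box a \<or> total_deg a \<noteq> q - 1" for a
  proof -
    have "of_nat (lower_coeff a j) * g (a + single j 1) = 0" if "in_box a" "j \<in> V" for j
    proof (cases "lookup a j + 1 < e j")
      case True
      have "total_deg a + 1 \<noteq> q"
        using \<open>q = 0 \<or> \<not> in_box a \<or> total_deg a \<noteq> q - 1\<close> \<open>in_box a\<close> by auto
      then have "g (a + single j 1) = 0"
        using in_box_plus_single[OF that True] assms unfolding homogeneous_def by auto
      then show ?thesis by simp
    qed (simp add: lower_coeff_def)
    then show ?thesis by (simp add: lower_def del: mult_eq_0_iff)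
  qed
  then show "homogeneous (q - 1) (lower g)" "q = 0 \<Longrightarrow> lower g = (\<lambda>a. 0)"
    unfolding homogeneous_def by auto
qed

lemma homogeneous_eq_0_above: "homogeneous q g \<Longrightarrow> socle_deg < q \<Longrightarrow> g = (\<lambda>a. 0)"
  unfolding homogeneous_def using total_deg_le_socle_deg by fastforce

lemma homogeneous_raise_pow: "homogeneous q g \<Longrightarrow> homogeneous (q + k) ((raise ^^ k) g)"
  by (induction k) (simp_all add: homogeneous_raise)

lemma homogeneous_lower_pow: "homogeneous q g \<Longrightarrow> homogeneous (q - k) ((lower ^^ k) g)"
proof (induction k)
  case (Suc k)
  have "q - Suc k = q - k - 1" by simp
  then show ?case using homogeneous_lower(1)[OF Suc.IH[OF Suc.prems]] by simp
qed simp

lemma lower_pow_eq_0: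
  assumes "homogeneous q g" "q < k"
  shows "(lower ^^ k) g = (\<lambda>a. 0)"
proof -
  have "lower ((lower ^^ q) g) = (\<lambda>a. 0)"
    using homogeneous_lower(2)[OF homogeneous_lower_pow[OF assms(1), of q]] by simp
  moreover obtain r where "k = r + Suc q" using assms(2) by (metis add.commute less_imp_Suc_add add_Suc_right)
  ultimately show ?thesis by (simp only: funpow_add funpow.simps comp_apply lower_pow_zero)
qed

lemma raise_lower_commutator_homogeneous:
  assumes "homogeneous p g"
  shows "raise (lower g) = (\<lambda>a. lower (raise g) a + of_int (2 * int p - int socle_deg) * g a)"
proof
  fix a
  show "raise (lower g) a = lower (raise g) a + of_int (2 * int p - int socle_deg) * g a"
  proof (cases "in_box a")
    case True
    have "total_deg a \<noteq> p \<Longrightarrow> g a = 0" using assms True by (simp add: homogeneous_def)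
    then show ?thesis using raise_lower_commutator[OF True, of g] by (cases "total_deg a = p") simp_all
  next
    case False
    then have "g a = 0" "raise h a = 0" "lower h a = 0" for h :: "('v \<Rightarrow>\<^sub>0 nat) \<Rightarrow> 'a"
      using assms by (simp_all add: homogeneous_def raise_def lower_def)
    then show ?thesis by simp
  qed
qed

lemma raise_lower_pow_highest:
  assumes "homogeneous p u" "raise u = (\<lambda>a. 0)"
  shows "raise ((lower ^^ Suc j) u) =
    (\<lambda>a. of_int (int (Suc j) * (2 * int p - int socle_deg - int j)) * (lower ^^ j) u a)"
proof (induction j)
  case 0
  show ?case using raise_lower_commutator_homogeneous[OF assms(1)] assms(2) by simp
next
  case (Suc j)
  define \<nu> where "\<nu> = 2 * int p - int socle_deg"
  have weight: "raise (lower ((lower ^^ Suc j) u)) =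
      (\<lambda>a. lower (raise ((lower ^^ Suc j) u)) a + of_int (\<nu> - 2 * int (Suc j)) * (lower ^^ Suc j) u a)"
  proof (cases "Suc j \<le> p")
    case True
    then show ?thesis
      using raise_lower_commutator_homogeneous[OF homogeneous_lower_pow[OF assms(1), of "Suc j"]]
      by (simp add: \<nu>_def of_nat_diff algebra_simps)
  next
    case False
    then show ?thesis using lower_pow_eq_0[OF assms(1), of "Suc j"] by simp
  qed
  have coeff: "int (Suc j) * (\<nu> - int j) + (\<nu> - 2 * int (Suc j)) = int (Suc (Suc j)) * (\<nu> - int (Suc j))"
    by (simp add: algebra_simps)
  have "raise ((lower ^^ Suc (Suc j)) u) = raise (lower ((lower ^^ Suc j) u))" by simp
  also have "\<dots> = (\<lambda>a. of_int (int (Suc j) * (\<nu> - int j)) * lower ((lower ^^ j) u) a +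
      of_int (\<nu> - 2 * int (Suc j)) * (lower ^^ Suc j) u a)"
    unfolding weight Suc.IH[folded \<nu>_def] fun_linear_scale[OF fun_linear_lower] by simp
  also have "\<dots> = (\<lambda>a. of_int (int (Suc (Suc j)) * (\<nu> - int (Suc j))) * (lower ^^ Suc j) u a)"
    by (simp only: funpow.simps comp_apply distrib_right[symmetric] of_int_add[symmetric] coeff)
  finally show ?case unfolding \<nu>_def .
qed

lemma raise_pow_lower_pow_highest:
  assumes "homogeneous p u" "raise u = (\<lambda>a. 0)"
  shows "(raise ^^ k) ((lower ^^ (m + k)) u) =
    (\<lambda>a. of_int (\<Prod>t<k. int (m + t + 1) * (2 * int p - int socle_deg - int (m + t))) * (lower ^^ m) u a)"
proof (induction k)
  case (Suc k)
  let ?c = "\<lambda>t. int (m + t + 1) * (2 * int p - int socle_deg - int (m + t))"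
  have "(raise ^^ Suc k) ((lower ^^ (m + Suc k)) u) = (raise ^^ k) (raise ((lower ^^ Suc (m + k)) u))"
    by (simp add: funpow_Suc_right del: funpow.simps)
  also have "\<dots> = (raise ^^ k) (\<lambda>a. of_int (?c k) * (lower ^^ (m + k)) u a)"
    using raise_lower_pow_highest[OF assms, of "m + k"] by simp
  also have "\<dots> = (\<lambda>a. of_int (?c k) * (raise ^^ k) ((lower ^^ (m + k)) u) a)"
    by (rule fun_linear_scale[OF fun_linear_funpow[OF fun_linear_raise]])
  also have "\<dots> = (\<lambda>a. of_int (\<Prod>t<Suc k. ?c t) * (lower ^^ m) u a)"
    by (simp add: Suc.IH mult_ac)
  finally show ?case .
qed simp

lemma raise_pow_surjective_step:
  assumes "int k \<le> 2 * int q - int socle_deg" "homogeneous q z" "(raise ^^ Suc h) z = (\<lambda>a. 0)"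
  obtains y z' where "homogeneous q z'" "(raise ^^ h) z' = (\<lambda>a. 0)" "z = (\<lambda>a. (raise ^^ k) y a + z' a)"
proof -
  define u where "u = (raise ^^ h) z"
  have u: "homogeneous (q + h) u" "raise u = (\<lambda>a. 0)"
    using homogeneous_raise_pow[OF assms(2)] assms(3) by (simp_all add: u_def)
  define \<nu> where "\<nu> = 2 * int (q + h) - int socle_deg"
  define c1 where "c1 = (of_int (\<Prod>t<h. int (0 + t + 1) * (\<nu> - int (0 + t))) :: 'a)"
  define c2 where "c2 = (of_int (\<Prod>t<k. int (h + t + 1) * (\<nu> - int (h + t))) :: 'a)"
  have "c1 \<noteq> 0" "c2 \<noteq> 0"
    unfolding c1_def c2_def of_int_eq_0_iff using assms(1) by (auto simp: \<nu>_def prod_zero_iff)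
  have highest: "(raise ^^ h) ((lower ^^ h) u) = (\<lambda>a. c1 * u a)"
    "(raise ^^ k) ((lower ^^ (h + k)) u) = (\<lambda>a. c2 * (lower ^^ h) u a)"
    using raise_pow_lower_pow_highest[OF u, where m = 0 and k = h]
      raise_pow_lower_pow_highest[OF u, where m = h and k = k]
    by (simp_all add: c1_def c2_def \<nu>_def)
  define y where "y = (\<lambda>a. 1 / (c1 * c2) * (lower ^^ (h + k)) u a)"
  define z' where "z' = (\<lambda>a. z a - 1 / c1 * (lower ^^ h) u a)"
  have "homogeneous q z'"
    using assms(2) homogeneous_lower_pow[OF u(1), of h] by (simp add: homogeneous_def z'_def)
  moreover have "(raise ^^ h) z' = (\<lambda>a. 0)"
    unfolding z'_def fun_linear_diff[OF fun_linear_funpow[OF fun_linear_raise]]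
      fun_linear_scale[OF fun_linear_funpow[OF fun_linear_raise]] highest
    using \<open>c1 \<noteq> 0\<close> by (simp add: u_def)
  moreover have "z = (\<lambda>a. (raise ^^ k) y a + z' a)"
    unfolding y_def fun_linear_scale[OF fun_linear_funpow[OF fun_linear_raise]] highest
    using \<open>c1 \<noteq> 0\<close> \<open>c2 \<noteq> 0\<close> by (simp add: z'_def)
  ultimately show ?thesis using that by blast
qed

lemma raise_pow_surjective:
  assumes "int k \<le> 2 * int q - int socle_deg" "homogeneous q z"
  shows "\<exists>y. (raise ^^ k) y = z"
proof -
  have "\<exists>y. (raise ^^ k) y = z" if "homogeneous q z" "(raise ^^ h) z = (\<lambda>a. 0)" for h z
    using that
  proof (induction h arbitrary: z)
    case 0
    then show ?case by (intro exI[of _ "\<lambda>a. 0"]) simp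
  next
    case (Suc h)
    obtain y z' where "homogeneous q z'" "(raise ^^ h) z' = (\<lambda>a. 0)" "z = (\<lambda>a. (raise ^^ k) y a + z' a)"
      using raise_pow_surjective_step[OF assms(1) Suc.prems] .
    moreover obtain y' where "(raise ^^ k) y' = z'" using Suc.IH calculation(1,2) by blast
    ultimately have "(raise ^^ k) (\<lambda>a. y a + y' a) = z"
      by (simp add: fun_linear_add[OF fun_linear_funpow[OF fun_linear_raise]])
    then show ?case by blast
  qed
  moreover have "(raise ^^ Suc socle_deg) z = (\<lambda>a. 0)"
    by (rule homogeneous_eq_0_above[OF homogeneous_raise_pow[OF assms(2)]]) simp
  ultimately show ?thesis using assms(2) by blast
qed

lemma raise_pow_lower_commutator:
  assumes "homogeneous p g"
  shows "(raise ^^ Suc j) (lower g) = (\<lambda>a. lower ((raise ^^ Suc j) g) a +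
    of_int (int (Suc j) * (2 * int p - int socle_deg + int j)) * (raise ^^ j) g a)"
proof (induction j)
  case 0
  show ?case using raise_lower_commutator_homogeneous[OF assms] by simp
next
  case (Suc j)
  define \<nu> where "\<nu> = 2 * int p - int socle_deg"
  define h where "h = (raise ^^ Suc j) g"
  have coeff: "\<nu> + (2 * int (Suc j) + int (Suc j) * (\<nu> + int j)) = int (Suc (Suc j)) * (\<nu> + int (Suc j))"
    by (simp add: algebra_simps)
  have "(raise ^^ Suc (Suc j)) (lower g) = raise ((raise ^^ Suc j) (lower g))" by simp
  also have "\<dots> = raise (\<lambda>a. lower h a + of_int (int (Suc j) * (\<nu> + int j)) * (raise ^^ j) g a)"
    unfolding Suc.IH h_def \<nu>_def ..
  also have "\<dots> = (\<lambda>a. raise (lower h) a + of_int (int (Suc j) * (\<nu> + int j)) * h a)"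
    unfolding fun_linear_add[OF fun_linear_raise] fun_linear_scale[OF fun_linear_raise] h_def by simp
  also have "\<dots> = (\<lambda>a. lower (raise h) a + of_int (\<nu> + 2 * int (Suc j)) * h a +
      of_int (int (Suc j) * (\<nu> + int j)) * h a)"
    unfolding raise_lower_commutator_homogeneous[OF homogeneous_raise_pow[OF assms, of "Suc j"], folded h_def]
    by (simp add: \<nu>_def algebra_simps)
  also have "\<dots> = (\<lambda>a. lower (raise h) a + of_int (int (Suc (Suc j)) * (\<nu> + int (Suc j))) * h a)"
    by (simp only: add.assoc distrib_right[symmetric] of_int_add[symmetric] coeff)
  finally show ?case by (simp add: h_def \<nu>_def)
qed

lemma lowest_weight_eq_0:
  assumes "lower g = (\<lambda>a. 0)" "homogeneous p g" "(raise ^^ j) g = (\<lambda>a. 0)" "2 * p + j \<le> socle_deg"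
  shows "g = (\<lambda>a. 0)"
  using assms(3,4)
proof (induction j)
  case (Suc j)
  define c where "c = int (Suc j) * (2 * int p - int socle_deg + int j)"
  have "c \<noteq> 0" using Suc.prems(2) by (simp add: c_def)
  have "(\<lambda>a. 0) = (\<lambda>a. 0 + of_int c * (raise ^^ j) g a)"
    using raise_pow_lower_commutator[OF assms(2), of j]
    unfolding assms(1) raise_pow_zero Suc.prems(1) lower_zero c_def .
  then have "(raise ^^ j) g = (\<lambda>a. 0)" using \<open>c \<noteq> 0\<close> by (simp add: fun_eq_iff)
  then show ?case using Suc.IH Suc.prems(2) by simp
qed simp

lemma raise_pow_injective:
  "homogeneous q g \<Longrightarrow> (raise ^^ j) g = (\<lambda>a. 0) \<Longrightarrow> 2 * q + j \<le> socle_deg \<Longrightarrow> g = (\<lambda>a. 0)"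
proof (induction q arbitrary: j g)
  case 0
  have "lower g = (\<lambda>a. 0)" using homogeneous_lower(2)[OF 0(1)] by simp
  then show ?case by (rule lowest_weight_eq_0[OF _ 0(1) 0(2) 0(3)])
next
  case (Suc q)
  have "homogeneous q (lower g)" using homogeneous_lower(1)[OF Suc.prems(1)] by simp
  moreover have "(raise ^^ Suc j) (lower g) = (\<lambda>a. 0)"
    unfolding raise_pow_lower_commutator[OF Suc.prems(1), of j] Suc.prems(2) using Suc.prems(2) by simp
  ultimately have "lower g = (\<lambda>a. 0)" using Suc.IH[of "lower g" "Suc j"] Suc.prems(3) by simp
  then show ?case by (rule lowest_weight_eq_0[OF _ Suc.prems])
qed

lemma raise_pow_kernel_homogeneous:
  assumes "homogeneous q u" "(raise ^^ D) u = (\<lambda>a. 0)" "1 \<le> D" "even (socle_deg + D)"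
  shows "\<exists>w. (raise ^^ (D - 1)) u = (raise ^^ D) w"
proof (cases "2 * q + D \<le> socle_deg")
  case True
  then have "u = (\<lambda>a. 0)" using raise_pow_injective assms(1,2) by blast
  then show ?thesis by (intro exI[of _ "\<lambda>a. 0"]) simp
next
  case False
  text \<open>By parity, \<open>2q + D\<close> then exceeds the socle degree by at least two, which puts
    \<open>raise\<^bsup>D\<^esup>\<close> from degree \<open>q + D - 1\<close> into its surjective range.\<close>
  moreover obtain m where "socle_deg + D = 2 * m" using assms(4) by (metis dvd_def)
  ultimately have "socle_deg + 2 \<le> 2 * q + D" by presburger
  then have "int D \<le> 2 * int (q + (D - 1)) - int socle_deg" using assms(3) by simp
  from raise_pow_surjective[OF this homogeneous_raise_pow[OF assms(1)]] show ?thesis by metis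
qed

definition homogeneous_part ::
    "nat \<Rightarrow> (('v \<Rightarrow>\<^sub>0 nat) \<Rightarrow> 'a::field_char_0) \<Rightarrow> ('v \<Rightarrow>\<^sub>0 nat) \<Rightarrow> 'a" where
  "homogeneous_part q g = (\<lambda>a. if in_box a \<and> total_deg a = q then g a else 0)"

lemma homogeneous_homogeneous_part: "homogeneous q (homogeneous_part q g)"
  by (simp add: homogeneous_def homogeneous_part_def)

lemma sum_homogeneous_part: "in_box a \<Longrightarrow> (\<Sum>q\<le>socle_deg. homogeneous_part q g a) = g a"
  by (simp add: homogeneous_part_def total_deg_le_socle_deg)

lemma raise_homogeneous_part: "raise (homogeneous_part q g) = homogeneous_part (Suc q) (raise g)"
proof
  fix a
  show "raise (homogeneous_part q g) a = homogeneous_part (Suc q) (raise g) a"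
  proof (cases "in_box a \<and> total_deg a = Suc q")
    case True
    then have "raise (homogeneous_part q g) a = (\<Sum>i\<in>{i\<in>V. 0 < lookup a i}. g (a - single i 1))"
      using in_box_minus_single[of a] by (auto simp: raise_def homogeneous_part_def intro!: sum.cong)
    then show ?thesis using True by (simp add: raise_def homogeneous_part_def)
  next
    case False
    then show ?thesis using homogeneous_raise[OF homogeneous_homogeneous_part, of q g]
      by (auto simp: homogeneous_def homogeneous_part_def)
  qed
qed

lemma raise_pow_homogeneous_part:
  "(raise ^^ k) (homogeneous_part q g) = homogeneous_part (q + k) ((raise ^^ k) g)"
  by (induction k) (simp_all add: raise_homogeneous_part)

lemma raise_pow_kernel:
  assumes "1 \<le> D" "even (socle_deg + D)" "\<And>a. in_box a \<Longrightarrow> (raise ^^ D) u a = 0"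
  obtains w where "\<And>a. in_box a \<Longrightarrow> (raise ^^ (D - 1)) u a = (raise ^^ D) w a"
proof -
  have "\<exists>w. (raise ^^ (D - 1)) (homogeneous_part q u) = (raise ^^ D) w" for q
  proof (rule raise_pow_kernel_homogeneous[OF homogeneous_homogeneous_part _ assms(1,2)])
    show "(raise ^^ D) (homogeneous_part q u) = (\<lambda>a. 0)"
      unfolding raise_pow_homogeneous_part using assms(3) by (auto simp: homogeneous_part_def)
  qed
  then obtain W where W: "\<And>q. (raise ^^ (D - 1)) (homogeneous_part q u) = (raise ^^ D) (W q)"
    by metis
  have "(raise ^^ D) (\<lambda>a. \<Sum>q\<le>socle_deg. W q a) =
      (raise ^^ (D - 1)) (\<lambda>a. \<Sum>q\<le>socle_deg. homogeneous_part q u a)"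
    by (simp add: fun_linear_sum[OF fun_linear_funpow[OF fun_linear_raise]] W del: One_nat_def)
  moreover have "(raise ^^ (D - 1)) (\<lambda>a. \<Sum>q\<le>socle_deg. homogeneous_part q u a) a = (raise ^^ (D - 1)) u a"
    if "in_box a" for a
    by (rule raise_pow_cong[OF sum_homogeneous_part that])
  ultimately show ?thesis using that by metis
qed

end

section \<open>The colon ideals\<close>

text \<open>A polynomial modulo \<open>(x\<^sub>i\<^bsup>d\<^sub>i\<^esup>, x\<^sub>n\<^sup>2)\<close> is determined by its coefficients at \<open>a\<close> and
  \<open>a + exp_xn\<close> for \<open>a\<close> in the box. The index set is written \<open>{0<..<n}\<close> rather than
  \<open>{1..<n}\<close> because the simplifier rewrites \<open>1\<close> to \<open>Suc 0\<close> inside the locale parameter, after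
  which the lemmas of \<open>monomial_box\<close> no longer match.\<close>

locale monomial_ci =
  fixes n :: nat and d :: "nat \<Rightarrow> nat"
  assumes n_pos: "1 \<le> n"
begin

sublocale monomial_box "{0<..<n}" d
  by unfold_locales simp

definition exp_xn :: "nat \<Rightarrow>\<^sub>0 nat" where
  "exp_xn = single n 1"

abbreviation ell :: "'a::comm_ring_1 mpoly" where
  "ell \<equiv> \<Sum>i=1..n. var i"

abbreviation ell0 :: "'a::comm_ring_1 mpoly" where
  "ell0 \<equiv> \<Sum>i\<in>{0<..<n}. var i"

lemma ell_eq: "ell = ell0 + var n"
proof -
  have "{1..n} = insert n {0<..<n}" using n_pos by auto
  then show ?thesis by (simp add: add.commute)
qed

lemma var_n_polyR: "var n \<in> polyR n"
  using n_pos by (simp add: polyR_var)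

lemma ell_polyR: "ell \<in> polyR n"
  by (rule polyR_sum, rule polyR_var) simp

lemma in_box_lookup_n: "in_box a \<Longrightarrow> lookup a n = 0"
  unfolding in_box_def by (auto simp: in_keys_iff)

lemma not_in_box_shift: "\<not> in_box (a + exp_xn)"
proof
  assume "in_box (a + exp_xn)"
  then have "lookup (a + exp_xn) n = 0" by (rule in_box_lookup_n)
  then show False by (simp add: exp_xn_def lookup_add)
qed

lemma lookup_var_n_mult_box: "in_box a \<Longrightarrow> lookup (var n * q) a = 0"
  by (simp add: lookup_var_mult in_box_lookup_n)

lemma lookup_var_n_mult_shift: "lookup (var n * q) (a + exp_xn) = lookup q a"
  by (simp add: lookup_var_mult exp_xn_def lookup_add del: One_nat_def)

lemma lookup_var_mult_shift:
  assumes "i \<noteq> n"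
  shows "lookup (var i * q) (a + exp_xn) = (if 0 < lookup a i then lookup q (a - single i 1 + exp_xn) else 0)"
proof -
  have "a + exp_xn - single i 1 = a - single i 1 + exp_xn"
    using assms by (intro poly_mapping_eqI) (simp add: exp_xn_def lookup_add lookup_minus lookup_single when_def)
  then show ?thesis
    using assms by (simp add: lookup_var_mult exp_xn_def lookup_add lookup_single del: One_nat_def)
qed

lemma lookup_ell0_mult:
  assumes "in_box a"
  shows "lookup (ell0 * q) a = raise (\<lambda>b. lookup q b) a"
    and "lookup (ell0 * q) (a + exp_xn) = raise (\<lambda>b. lookup q (b + exp_xn)) a"
proof -
  have filter: "(\<Sum>i\<in>{0<..<n}. if 0 < lookup a i then h i else 0) = (\<Sum>i\<in>{i\<in>{0<..<n}. 0 < lookup a i}. h i)"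
    for h :: "nat \<Rightarrow> 'a"
    by (rule sum.inter_filter[symmetric]) simp
  show "lookup (ell0 * q) a = raise (\<lambda>b. lookup q b) a"
    using assms by (simp add: sum_distrib_right lookup_sum lookup_var_mult filter raise_def del: One_nat_def)
  show "lookup (ell0 * q) (a + exp_xn) = raise (\<lambda>b. lookup q (b + exp_xn)) a"
    using assms by (simp add: sum_distrib_right lookup_sum lookup_var_mult_shift filter raise_def del: One_nat_def)
qed

lemma lookup_ell_power_mult:
  assumes "in_box a"
  shows "lookup (ell ^ k * (q :: 'a::field_char_0 mpoly)) a = (raise ^^ k) (\<lambda>b. lookup q b) a \<and>
    lookup (ell ^ k * q) (a + exp_xn) =
      (raise ^^ k) (\<lambda>b. lookup q (b + exp_xn)) a + of_nat k * (raise ^^ (k - 1)) (\<lambda>b. lookup q b) a"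
  using assms
proof (induction k arbitrary: a)
  case (Suc k)
  define r where "r = ell ^ k * q"
  have r: "ell ^ Suc k * q = ell0 * r + var n * r"
    unfolding r_def ell_eq power_Suc by (simp only: mult.assoc distrib_right)
  have IH: "lookup r b = (raise ^^ k) (\<lambda>b. lookup q b) b"
    "lookup r (b + exp_xn) = (raise ^^ k) (\<lambda>b. lookup q (b + exp_xn)) b + of_nat k * (raise ^^ (k - 1)) (\<lambda>b. lookup q b) b"
    if "in_box b" for b
    using Suc.IH[OF that] by (simp_all add: r_def)
  have cong1: "raise (\<lambda>b. lookup r b) = raise ((raise ^^ k) (\<lambda>b. lookup q b))"
    by (rule raise_cong) (rule IH(1))
  have cong2: "raise (\<lambda>b. lookup r (b + exp_xn)) = raise (\<lambda>b. (raise ^^ k) (\<lambda>b. lookup q (b + exp_xn)) b +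
       of_nat k * (raise ^^ (k - 1)) (\<lambda>b. lookup q b) b)"
    by (rule raise_cong) (rule IH(2))
  have pred: "of_nat k * raise ((raise ^^ (k - 1)) (\<lambda>b. lookup q b)) a =
      of_nat k * (raise ^^ k) (\<lambda>b. lookup q b) a"
    by (cases k) simp_all
  have "lookup (ell ^ Suc k * q) a = raise (\<lambda>b. lookup r b) a"
    unfolding r lookup_add lookup_ell0_mult(1)[OF Suc.prems] lookup_var_n_mult_box[OF Suc.prems] by simp
  moreover have "lookup (ell ^ Suc k * q) (a + exp_xn) = raise (\<lambda>b. lookup r (b + exp_xn)) a + lookup r a"
    unfolding r lookup_add lookup_ell0_mult(2)[OF Suc.prems] lookup_var_n_mult_shift ..
  ultimately show ?case
    unfolding cong1 cong2 fun_linear_add[OF fun_linear_raise] fun_linear_scale[OF fun_linear_raise] pred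
      IH(1)[OF Suc.prems]
    by (simp add: algebra_simps)
qed simp

lemmas lookup_ell_power_mult_box = lookup_ell_power_mult[THEN conjunct1]
  and lookup_ell_power_mult_shift = lookup_ell_power_mult[THEN conjunct2]

definition monomial_gens :: "'a::comm_ring_1 mpoly set" where
  "monomial_gens = (\<lambda>i. var i ^ d i) ` {0<..<n} \<union> {var n ^ 2}"

lemma finite_monomial_gens: "finite monomial_gens"
  by (simp add: monomial_gens_def)

lemma monomial_gens_polyR: "monomial_gens \<subseteq> polyR n"
  unfolding monomial_gens_def using n_pos by (auto intro!: polyR_power polyR_var)

lemma var_n_square_mem: "var n ^ 2 \<in> ideal_gen n monomial_gens"
  by (rule ideal_gen_generator[OF finite_monomial_gens]) (simp add: monomial_gens_def)

lemma lookup_monomial_ideal_box: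
  assumes "q \<in> ideal_gen n (monomial_gens :: 'a::comm_ring_1 mpoly set)" "in_box a"
  shows "lookup q a = 0" "lookup q (a + exp_xn) = 0"
proof -
  obtain c where q: "q = (\<Sum>g\<in>monomial_gens. c g * g)" using assms(1) unfolding ideal_gen_def by blast
  have "lookup (c g * g) x = 0" if "g \<in> monomial_gens" "x = a \<or> x = a + exp_xn" for g x
  proof -
    have bound: "lookup x i < d i" if "i \<in> {0<..<n}" for i
      using assms(2) that \<open>x = a \<or> x = a + exp_xn\<close> unfolding in_box_def
      by (auto simp: exp_xn_def lookup_add lookup_single)
    have bound_n: "lookup x n < 2"
      using in_box_lookup_n[OF assms(2)] \<open>x = a \<or> x = a + exp_xn\<close> by (auto simp: exp_xn_def lookup_add)
    from that(1) consider i where "i \<in> {0<..<n}" "g = var i ^ d i" | "g = var n ^ 2"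
      unfolding monomial_gens_def by blast
    then show ?thesis
    proof cases
      case 1
      show ?thesis unfolding 1(2) mult.commute[of "c _"] lookup_var_power_mult using bound[OF 1(1)] by simp
    next
      case 2
      show ?thesis unfolding 2 mult.commute[of "c _"] lookup_var_power_mult using bound_n by simp
    qed
  qed
  then show "lookup q a = 0" "lookup q (a + exp_xn) = 0"
    unfolding q lookup_sum by simp_all
qed

lemma exponent_cases:
  assumes "keys t \<subseteq> {1..n}"
  obtains "2 \<le> lookup t n"
  | i where "i \<in> {0<..<n}" "d i \<le> lookup t i"
  | "in_box t"
  | a where "in_box a" "t = a + exp_xn"
proof (cases "2 \<le> lookup t n \<or> (\<exists>i\<in>{0<..<n}. d i \<le> lookup t i)")
  case True
  then show ?thesis using that(1,2) by blast
next
  case False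
  define a where "a = t - single n (lookup t n)"
  have lookup_a: "lookup a i = (if i = n then 0 else lookup t i)" for i
    by (simp add: a_def lookup_minus lookup_single when_def)
  have "keys a \<subseteq> {0<..<n}"
  proof
    fix i assume "i \<in> keys a"
    then have "i \<noteq> n" "i \<in> keys t" by (auto simp: in_keys_iff lookup_a split: if_splits)
    then show "i \<in> {0<..<n}" using assms by auto
  qed
  then have "in_box a" using False by (auto simp: in_box_def lookup_a)
  moreover have "t = a \<or> t = a + exp_xn"
  proof (cases "lookup t n = 0")
    case True
    then show ?thesis by (auto intro!: poly_mapping_eqI simp: lookup_a)
  next
    case False
    with \<open>\<not> (2 \<le> lookup t n \<or> _)\<close> have "lookup t n = 1" by auto
    then show ?thesis
      by (auto intro!: poly_mapping_eqI simp: lookup_a exp_xn_def lookup_add lookup_single when_def split: if_splits)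
  qed
  ultimately show ?thesis using that(3,4) by blast
qed

lemma single_mem_monomial_ideal:
  assumes "keys t \<subseteq> {1..n}" "\<not> in_box t" "\<nexists>a. in_box a \<and> t = a + exp_xn"
  shows "single t c \<in> ideal_gen n (monomial_gens :: 'a::comm_ring_1 mpoly set)"
  using assms(1)
proof (cases rule: exponent_cases)
  case 1
  then obtain k where "t = single n 2 + k" unfolding exists_add_single_iff[symmetric] by blast
  moreover have "single (single n 2) 1 \<in> ideal_gen n (monomial_gens :: 'a mpoly set)"
    using var_n_square_mem by (simp only: var_power)
  ultimately show ?thesis by (rule single_in_ideal_gen[OF assms(1)])
next
  case (2 i)
  then obtain k where "t = single i (d i) + k" unfolding exists_add_single_iff[symmetric] by blast
  moreover have "var i ^ d i \<in> ideal_gen n (monomial_gens :: 'a mpoly set)"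
    using 2(1) by (intro ideal_gen_generator[OF finite_monomial_gens]) (simp add: monomial_gens_def)
  then have "single (single i (d i)) 1 \<in> ideal_gen n (monomial_gens :: 'a mpoly set)"
    by (simp only: var_power)
  ultimately show ?thesis by (rule single_in_ideal_gen[OF assms(1)])
next
  case 3
  then show ?thesis using assms(2) by blast
next
  case (4 a)
  then show ?thesis using assms(3) by blast
qed

lemma mem_monomial_ideal_plus_xn_ideal:
  assumes "q \<in> polyR n" "\<And>a. in_box a \<Longrightarrow> lookup q a = 0"
  shows "q \<in> ideal_plus (ideal_gen n monomial_gens) (ideal_gen n {var n :: 'a::comm_ring_1 mpoly})"
proof (subst poly_mapping_sum_single[of q], rule ideal_plus_sum)
  fix t assume "t \<in> keys q"
  then have keys_t: "keys t \<subseteq> {1..n}" and "\<not> in_box t"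
    using assms by (auto simp: polyR_def in_keys_iff)
  show "single t (lookup q t) \<in> ideal_plus (ideal_gen n monomial_gens) (ideal_gen n {var n})"
  proof (cases "\<exists>a. in_box a \<and> t = a + exp_xn")
    case True
    then obtain a where "t = exp_xn + a" by (auto simp: add.commute)
    moreover have "single exp_xn 1 \<in> ideal_gen n {var n :: 'a mpoly}"
      using ideal_gen_generator[of "{var n}" "var n" n] by (simp add: var_def exp_xn_def)
    ultimately have "single t (lookup q t) \<in> ideal_gen n {var n}" by (rule single_in_ideal_gen[OF keys_t])
    from ideal_plus_intro[OF ideal_gen_0 this] show ?thesis by simp
  next
    case False
    then have "single t (lookup q t) \<in> ideal_gen n monomial_gens"
      using single_mem_monomial_ideal keys_t \<open>\<not> in_box t\<close> by blast
    from ideal_plus_intro[OF this ideal_gen_0] show ?thesis by simp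
  qed
qed

lemma mem_monomial_ideal:
  assumes "q \<in> polyR n" "\<And>a. in_box a \<Longrightarrow> lookup q a = 0" "\<And>a. in_box a \<Longrightarrow> lookup q (a + exp_xn) = 0"
  shows "q \<in> ideal_gen n (monomial_gens :: 'a::comm_ring_1 mpoly set)"
proof (subst poly_mapping_sum_single[of q], rule ideal_gen_sum)
  fix t assume "t \<in> keys q"
  then show "single t (lookup q t) \<in> ideal_gen n monomial_gens"
    using assms by (intro single_mem_monomial_ideal) (auto simp: polyR_def in_keys_iff)
qed

definition box_poly :: "((nat \<Rightarrow>\<^sub>0 nat) \<Rightarrow> 'a::comm_ring_1) \<Rightarrow> 'a mpoly" where
  "box_poly g = (\<Sum>a\<in>{a. in_box a}. single a (g a))"

lemma lookup_box_poly: "lookup (box_poly g) x = (if in_box x then g x else 0)"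
proof -
  have "lookup (box_poly g) x = (\<Sum>a\<in>{a. in_box a}. g a when a = x)"
    by (simp add: box_poly_def lookup_sum lookup_single)
  also have "\<dots> = (if in_box x then g x else 0)"
    using finite_box by (cases "in_box x") (auto simp: when_def)
  finally show ?thesis .
qed

lemma box_poly_polyR: "box_poly g \<in> polyR n"
  unfolding box_poly_def by (rule polyR_sum, rule polyR_single) (auto simp: in_box_def)

lemma box_coeffs_var_n_mult_eq:
  fixes p :: "'a::field_char_0 mpoly"
  assumes "p * var n = j + f * ell ^ D" "j \<in> ideal_gen n monomial_gens" "in_box a"
  shows "(raise ^^ D) (\<lambda>b. lookup f b) a = 0"
    and "lookup p a = (raise ^^ D) (\<lambda>b. lookup f (b + exp_xn)) a + of_nat D * (raise ^^ (D - 1)) (\<lambda>b. lookup f b) a"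
proof -
  have "lookup (var n * p) x = lookup j x + lookup (ell ^ D * f) x" for x
    using assms(1) by (simp add: lookup_add mult.commute)
  from this[of a] this[of "a + exp_xn"] show
    "(raise ^^ D) (\<lambda>b. lookup f b) a = 0"
    "lookup p a = (raise ^^ D) (\<lambda>b. lookup f (b + exp_xn)) a + of_nat D * (raise ^^ (D - 1)) (\<lambda>b. lookup f b) a"
    unfolding lookup_var_n_mult_box[OF assms(3)] lookup_var_n_mult_shift
      lookup_monomial_ideal_box[OF assms(2,3)] lookup_ell_power_mult_box[OF assms(3)]
      lookup_ell_power_mult_shift[OF assms(3)]
    by simp_all
qed

lemma colon_var_n_subset_ideal_plus:
  fixes p :: "'a::field_char_0 mpoly"
  assumes "1 \<le> D" "even (socle_deg + D)"
    and "p \<in> ideal_colon n (ideal_gen n (insert (ell ^ D) monomial_gens)) (var n)"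
  shows "p \<in> ideal_plus (ideal_gen n (insert (ell ^ D) monomial_gens)) (ideal_gen n {var n})"
proof -
  let ?I = "ideal_gen n (insert (ell ^ D) (monomial_gens :: 'a mpoly set))"
  have fin: "finite (insert (ell ^ D) (monomial_gens :: 'a mpoly set))" by (simp add: finite_monomial_gens)
  from assms(3) have p: "p \<in> polyR n" "p * var n \<in> ?I" by (simp_all add: ideal_colon_def)
  then obtain j f where j: "j \<in> ideal_gen n monomial_gens" and eq: "p * var n = j + f * ell ^ D"
    using ideal_gen_insertE[OF finite_monomial_gens] by metis
  obtain w where w: "\<And>a. in_box a \<Longrightarrow> (raise ^^ (D - 1)) (\<lambda>b. lookup f b) a = (raise ^^ D) w a"
    using raise_pow_kernel[OF assms(1,2) box_coeffs_var_n_mult_eq(1)[OF eq j]] by blast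
  define g where "g = box_poly (\<lambda>b. lookup f (b + exp_xn) + of_nat D * w b)"
  have g: "g \<in> polyR n" unfolding g_def by (rule box_poly_polyR)
  have "lookup (p - g * ell ^ D) a = 0" if "in_box a" for a
  proof -
    have "lookup (g * ell ^ D) a = (raise ^^ D) (\<lambda>b. lookup f (b + exp_xn) + of_nat D * w b) a"
      unfolding mult.commute[of g] lookup_ell_power_mult_box[OF that]
      by (rule raise_pow_cong[OF _ that]) (simp add: g_def lookup_box_poly)
    then show ?thesis
      using box_coeffs_var_n_mult_eq(2)[OF eq j that] w[OF that]
      by (simp add: lookup_minus fun_linear_add[OF fun_linear_funpow[OF fun_linear_raise]]
          fun_linear_scale[OF fun_linear_funpow[OF fun_linear_raise]])
  qed
  then have "p - g * ell ^ D \<in> ideal_plus (ideal_gen n monomial_gens) (ideal_gen n {var n})"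
    by (intro mem_monomial_ideal_plus_xn_ideal polyR_diff polyR_mult polyR_power ell_polyR g p(1))
  then obtain j' x where j': "j' \<in> ideal_gen n monomial_gens" and x: "x \<in> ideal_gen n {var n}"
    and "p - g * ell ^ D = j' + x"
    unfolding ideal_plus_def by blast
  then have "p = (g * ell ^ D + j') + x" by (simp add: algebra_simps)
  moreover have "g * ell ^ D + j' \<in> ?I"
    using ideal_gen_mult[OF ideal_gen_generator[OF fin, of "ell ^ D"] g]
      ideal_gen_mono[OF fin, of monomial_gens] j'
    by (auto intro: ideal_gen_add)
  ultimately show ?thesis using ideal_plus_intro[OF _ x] by simp
qed

lemma colon_var_n_ideal_plus_ell_power:
  assumes "1 \<le> D" "even (socle_deg + D)"
  shows "ideal_colon n (ideal_gen n (insert (ell ^ D) (monomial_gens :: 'a::field_char_0 mpoly set))) (var n) =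
    ideal_plus (ideal_gen n (insert (ell ^ D) monomial_gens)) (ideal_gen n {var n})"
proof
  let ?S = "insert (ell ^ D) (monomial_gens :: 'a mpoly set)"
  have fin: "finite ?S" by (simp add: finite_monomial_gens)
  show "ideal_plus (ideal_gen n ?S) (ideal_gen n {var n}) \<subseteq> ideal_colon n (ideal_gen n ?S) (var n)"
  proof (rule ideal_plus_var_subset_colon)
    show "ideal_gen n ?S \<subseteq> polyR n"
      using monomial_gens_polyR polyR_power[OF ell_polyR] by (intro ideal_gen_subset_polyR) auto
    show "var n ^ 2 \<in> ideal_gen n ?S"
      using var_n_square_mem ideal_gen_mono[OF fin, of monomial_gens] by auto
  qed (use n_pos in \<open>auto intro: ideal_gen_add ideal_gen_mult\<close>)
  show "ideal_colon n (ideal_gen n ?S) (var n) \<subseteq> ideal_plus (ideal_gen n ?S) (ideal_gen n {var n})"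
    using colon_var_n_subset_ideal_plus[OF assms] by blast
qed

lemma raise_pow_box_coeffs_eq_0:
  fixes p :: "'a::field_char_0 mpoly"
  assumes "p * var n * ell ^ D \<in> ideal_gen n monomial_gens" "in_box a"
  shows "(raise ^^ D) (\<lambda>b. lookup p b) a = 0"
proof -
  have "(raise ^^ (D - 1)) (\<lambda>b. lookup (var n * p) b) a = (raise ^^ (D - 1)) (\<lambda>b. 0) a"
    by (rule raise_pow_cong[OF _ assms(2)]) (simp add: lookup_var_n_mult_box)
  moreover have "lookup (ell ^ D * (var n * p)) (a + exp_xn) = 0"
    using lookup_monomial_ideal_box(2)[OF assms] by (simp add: mult_ac)
  ultimately show ?thesis
    unfolding lookup_ell_power_mult_shift[OF assms(2)] lookup_var_n_mult_shift by simp
qed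

lemma box_lift_mem_colon:
  fixes u w :: "(nat \<Rightarrow>\<^sub>0 nat) \<Rightarrow> 'a::field_char_0"
  assumes "\<And>a. in_box a \<Longrightarrow> (raise ^^ D) u a = 0"
    and "\<And>a. in_box a \<Longrightarrow> (raise ^^ (D - 1)) u a = (raise ^^ D) w a"
  shows "box_poly u - var n * box_poly (\<lambda>b. of_nat D * w b) \<in> ideal_colon n (ideal_gen n monomial_gens) (ell ^ D)"
proof -
  define g where "g = box_poly u - var n * box_poly (\<lambda>b. of_nat D * w b)"
  have g: "g \<in> polyR n" unfolding g_def by (intro polyR_diff polyR_mult box_poly_polyR var_n_polyR)
  have box: "lookup g b = u b" and shift: "lookup g (b + exp_xn) = - of_nat D * w b" if "in_box b" for b
    using that not_in_box_shift[of b]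
    by (simp_all add: g_def lookup_minus lookup_box_poly lookup_var_n_mult_box lookup_var_n_mult_shift)
  have "ell ^ D * g \<in> ideal_gen n monomial_gens"
  proof (rule mem_monomial_ideal)
    show "ell ^ D * g \<in> polyR n" by (intro polyR_mult polyR_power ell_polyR g)
  next
    fix a assume a: "in_box a"
    show "lookup (ell ^ D * g) a = 0"
      unfolding lookup_ell_power_mult_box[OF a] using raise_pow_cong[OF box a] assms(1)[OF a] by simp
    have "(raise ^^ D) (\<lambda>b. lookup g (b + exp_xn)) a = (raise ^^ D) (\<lambda>b. - of_nat D * w b) a"
      by (rule raise_pow_cong[OF _ a]) (rule shift)
    also have "\<dots> = - of_nat D * (raise ^^ D) w a"
      by (simp only: fun_linear_scale[OF fun_linear_funpow[OF fun_linear_raise]])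
    finally show "lookup (ell ^ D * g) (a + exp_xn) = 0"
      unfolding lookup_ell_power_mult_shift[OF a] using raise_pow_cong[OF box a] assms(2)[OF a] by simp
  qed
  then show ?thesis using g by (simp add: ideal_colon_def g_def mult.commute)
qed

lemma colon_var_n_subset_ideal_plus_colon:
  fixes p :: "'a::field_char_0 mpoly"
  assumes "1 \<le> D" "even (socle_deg + D)"
    and "p \<in> ideal_colon n (ideal_colon n (ideal_gen n monomial_gens) (ell ^ D)) (var n)"
  shows "p \<in> ideal_plus (ideal_colon n (ideal_gen n monomial_gens) (ell ^ D)) (ideal_gen n {var n})"
proof -
  let ?G = "ideal_colon n (ideal_gen n (monomial_gens :: 'a mpoly set)) (ell ^ D)"
  from assms(3) have p: "p \<in> polyR n" "p * var n * ell ^ D \<in> ideal_gen n monomial_gens"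
    by (simp_all add: ideal_colon_def)
  obtain w where w: "\<And>a. in_box a \<Longrightarrow> (raise ^^ (D - 1)) (\<lambda>b. lookup p b) a = (raise ^^ D) w a"
    using raise_pow_kernel[OF assms(1,2) raise_pow_box_coeffs_eq_0[OF p(2)]] by blast
  define c where "c = box_poly (\<lambda>b. of_nat D * w b)"
  define g where "g = box_poly (\<lambda>b. lookup p b) - var n * c"
  have "g \<in> ?G"
    unfolding g_def c_def using box_lift_mem_colon raise_pow_box_coeffs_eq_0[OF p(2)] w by blast
  have "p - box_poly (\<lambda>b. lookup p b) \<in> ideal_plus (ideal_gen n monomial_gens) (ideal_gen n {var n})"
    by (rule mem_monomial_ideal_plus_xn_ideal) (auto intro: polyR_diff p(1) box_poly_polyR simp: lookup_minus lookup_box_poly)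
  then obtain j x where j: "j \<in> ideal_gen n monomial_gens" and x: "x \<in> ideal_gen n {var n}"
    and "p - box_poly (\<lambda>b. lookup p b) = j + x"
    unfolding ideal_plus_def by blast
  then have "p = (g + j) + (x + c * var n)" by (simp add: g_def algebra_simps)
  moreover have "j \<in> ?G"
    using j ideal_gen_mult[OF j polyR_power[OF ell_polyR, of D]] ideal_gen_subset_polyR[OF monomial_gens_polyR]
    by (auto simp: ideal_colon_def mult.commute)
  then have "g + j \<in> ?G" using \<open>g \<in> ?G\<close> by (rule ideal_colon_ideal_gen_add[rotated])
  moreover obtain c' where "c' \<in> polyR n" "x = c' * var n"
    using x unfolding ideal_gen_singleton by blast
  then have "x + c * var n \<in> ideal_gen n {var n}"
    unfolding ideal_gen_singleton c_def
    by (intro bexI[of _ "c' + box_poly (\<lambda>b. of_nat D * w b)"] polyR_add box_poly_polyR) (simp_all add: distrib_right)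
  ultimately show ?thesis using ideal_plus_intro by metis
qed

lemma colon_var_n_colon_ell_power:
  assumes "1 \<le> D" "even (socle_deg + D)"
  shows "ideal_colon n (ideal_colon n (ideal_gen n (monomial_gens :: 'a::field_char_0 mpoly set)) (ell ^ D)) (var n) =
    ideal_plus (ideal_colon n (ideal_gen n monomial_gens) (ell ^ D)) (ideal_gen n {var n})"
proof
  let ?G = "ideal_colon n (ideal_gen n (monomial_gens :: 'a mpoly set)) (ell ^ D)"
  show "ideal_plus ?G (ideal_gen n {var n}) \<subseteq> ideal_colon n ?G (var n)"
  proof (rule ideal_plus_var_subset_colon)
    show "var n ^ 2 \<in> ?G"
      using ideal_gen_mult[OF var_n_square_mem polyR_power[OF ell_polyR]] polyR_power[OF var_n_polyR]
      by (auto simp: ideal_colon_def mult.commute)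
  next
    show "?G \<subseteq> polyR n" by (auto simp: ideal_colon_def)
  next
    show "p + q \<in> ?G" if "p \<in> ?G" "q \<in> ?G" for p q using that by (rule ideal_colon_ideal_gen_add)
  next
    show "r * p \<in> ?G" if "p \<in> ?G" "r \<in> polyR n" for p r using that by (rule ideal_colon_ideal_gen_mult)
  qed (use n_pos in simp)
  show "ideal_colon n ?G (var n) \<subseteq> ideal_plus ?G (ideal_gen n {var n})"
    using colon_var_n_subset_ideal_plus_colon[OF assms] by blast
qed

end

theorem mainTheorem11:
  fixes n :: nat and d :: "nat \<Rightarrow> nat"
  assumes "n \<ge> 1"
    and "\<forall>i\<in>{1..n}. d i > 0"
    and "minimally_generated n
           (map (\<lambda>i. (var i :: 'a::field_char_0 mpoly) ^ d i) [1..<n]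
            @ [var n ^ 2, (\<Sum>i=1..n. var i) ^ d n])"
    and "odd (\<Sum>i=1..n. d i - 1)"
  shows
    "let I = ideal_gen n (((\<lambda>i. (var i :: 'a mpoly) ^ d i) ` {1..<n})
                          \<union> {var n ^ 2, (\<Sum>i=1..n. var i) ^ d n});
         G = ideal_colon n (ideal_gen n (((\<lambda>i. (var i :: 'a mpoly) ^ d i) ` {1..<n})
                                         \<union> {var n ^ 2}))
                          ((\<Sum>i=1..n. var i) ^ d n);
         X = ideal_gen n {var n :: 'a mpoly}
     in ideal_colon n I (var n) = ideal_plus I X
      \<and> ideal_colon n G (var n) = ideal_plus G X"
proof -
  interpret monomial_ci n d
    using assms(1) by unfold_locales
  have "1 \<le> d n" using assms(1,2) by (simp add: Suc_le_eq)
  have "{1..n} = insert n {0<..<n}" using assms(1) by auto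
  then have "socle_deg + d n = Suc (\<Sum>i=1..n. d i - 1)"
    using \<open>1 \<le> d n\<close> by (simp add: socle_deg_def)
  then have "even (socle_deg + d n)" using assms(4) by simp
  moreover have "{1..<n} = {0<..<n}" by auto
  then have "(\<lambda>i. (var i :: 'a mpoly) ^ d i) ` {1..<n} \<union> {var n ^ 2} = monomial_gens"
    "(\<lambda>i. (var i :: 'a mpoly) ^ d i) ` {1..<n} \<union> {var n ^ 2, ell ^ d n} = insert (ell ^ d n) monomial_gens"
    by (auto simp: monomial_gens_def)
  ultimately show ?thesis
    using colon_var_n_ideal_plus_ell_power[OF \<open>1 \<le> d n\<close>] colon_var_n_colon_ell_power[OF \<open>1 \<le> d n\<close>]
    by (simp add: Let_def)
qed

end
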